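(* Let $n\ge 1$ and let $\mathbf F$ be a family of subsets of $[n]$ such that $f(\mathbf F)\neq 0$, where $f(\mathbf F)=\sum_{\mathcal G} (-1)^{|\mathcal G|+1}$, the sum running over all nonempty subfamilies $\mathcal G\subseteq\mathbf F$ with $\bigcup_{G\in\mathcal G}G=[n]$. Then $\max\{r(\mathbf F),t(\mathbf F)\}\ge\sqrt n$.
   Context: $[n]=\{1,\dots,n\}$. The rank $r(\mathbf F)$ is the largest cardinality of a member of $\mathbf F$. $t(\mathbf F)$ is the largest $t$ for which there exist $F_1,\dots,F_t\in\mathbf F$ and elements $x_1,\dots,x_t$ with $x_i\in F_j$ iff $i=j$ (for all $1\le i,j\le t$). *)

theory Defs
  imports Complex_Main
begin

definition fam_f :: "nat \<Rightarrow> nat set set \<Rightarrow> int" where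
  "fam_f n F = (\<Sum>G\<in>{G. G \<subseteq> F \<and> G \<noteq> {} \<and> \<Union>G = {1..n}}. (-1) ^ (card G + 1))"

definition fam_rank :: "'a set set \<Rightarrow> nat" where
  "fam_rank F = Max (insert 0 (card ` F))"

definition fam_t :: "'a set set \<Rightarrow> nat" where
  "fam_t F = Max {t. \<exists>S :: nat \<Rightarrow> 'a set. \<exists>x :: nat \<Rightarrow> 'a.
      (\<forall>j\<in>{1..t}. S j \<in> F) \<and>
      (\<forall>i\<in>{1..t}. \<forall>j\<in>{1..t}. (x i \<in> S j \<longleftrightarrow> i = j))}"

end

theory Submission
  imports Defs
begin

text \<open>Since \<open>f(\<F>) \<noteq> 0\<close>, some subfamily of \<open>\<F>\<close> covers \<open>[n]\<close>; a cover of minimum size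
  is irredundant, so each of its members has a private element. These members with their
  private elements witness \<open>t(\<F>) \<ge> |\<G>|\<close>, while \<open>n \<le> |\<G>| \<cdot> r(\<F>)\<close>; hence
  \<open>n \<le> max(r(\<F>), t(\<F>))\<^sup>2\<close>.\<close>

definition has_private_elements :: "'a set set \<Rightarrow> bool" where
  "has_private_elements G \<longleftrightarrow> (\<forall>A\<in>G. \<exists>y\<in>A. \<forall>B\<in>G. B \<noteq> A \<longrightarrow> y \<notin> B)"

lemma minimal_subcover_has_private_elements:
  assumes "finite G0" and "\<Union>G0 = U"
  obtains G where "G \<subseteq> G0" and "\<Union>G = U" and "has_private_elements G"
proof -
  let ?C = "{G. G \<subseteq> G0 \<and> \<Union>G = U}"
  have "G0 \<in> ?C" using assms(2) by blast
  then obtain G where GC: "G \<in> ?C" and Gmin: "\<And>G'. G' \<in> ?C \<Longrightarrow> card G \<le> card G'"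
    using ex_has_least_nat[of "\<lambda>G. G \<in> ?C" G0 card] by blast
  have finG: "finite G" using GC assms(1) finite_subset by blast
  have "has_private_elements G"
    unfolding has_private_elements_def
  proof (rule ballI, rule ccontr)
    fix A assume A: "A \<in> G" and "\<not> (\<exists>y\<in>A. \<forall>B\<in>G. B \<noteq> A \<longrightarrow> y \<notin> B)"
    then have "G - {A} \<in> ?C" using GC by blast
    then have "card G \<le> card (G - {A})" by (rule Gmin)
    moreover have "card (G - {A}) < card G" using finG A by (rule card_Diff1_less)
    ultimately show False by simp
  qed
  with GC show thesis using that by blast
qed

lemma fam_t_ge:
  fixes F :: "'a set set" and S :: "nat \<Rightarrow> 'a set" and x :: "nat \<Rightarrow> 'a"
  assumes fin: "finite (\<Union>F)"
    and S: "\<forall>j\<in>{1..k}. S j \<in> F"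
    and x: "\<forall>i\<in>{1..k}. \<forall>j\<in>{1..k}. (x i \<in> S j \<longleftrightarrow> i = j)"
  shows "k \<le> fam_t F"
proof -
  let ?T = "{t. \<exists>S :: nat \<Rightarrow> 'a set. \<exists>x :: nat \<Rightarrow> 'a.
      (\<forall>j\<in>{1..t}. S j \<in> F) \<and> (\<forall>i\<in>{1..t}. \<forall>j\<in>{1..t}. (x i \<in> S j \<longleftrightarrow> i = j))}"
  have bound: "t \<le> card (\<Union>F)" if "t \<in> ?T" for t
  proof -
    from that obtain S x where S: "\<forall>j\<in>{1..t}. S j \<in> F"
      and x: "\<forall>i\<in>{1..t}. \<forall>j\<in>{1..t}. (x i \<in> S j \<longleftrightarrow> i = j)" by blast
    have "inj_on x {1..t}" by (rule inj_onI) (metis x)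
    moreover have "x ` {1..t} \<subseteq> \<Union>F" using S x by blast
    ultimately have "card {1..t} \<le> card (\<Union>F)" using fin by (rule card_inj_on_le)
    then show ?thesis by simp
  qed
  have "finite ?T" by (rule finite_subset[of _ "{..card (\<Union>F)}"]) (use bound in auto)
  moreover have "k \<in> ?T" using S x by blast
  ultimately show ?thesis unfolding fam_t_def by (rule Max_ge)
qed

lemma card_le_fam_t:
  assumes "finite (\<Union>F)" and "finite G" and "G \<subseteq> F" and "has_private_elements G"
  shows "card G \<le> fam_t F"
proof -
  obtain p where p: "\<And>A. A \<in> G \<Longrightarrow> p A \<in> A \<and> (\<forall>B\<in>G. B \<noteq> A \<longrightarrow> p A \<notin> B)"
    using assms(4) unfolding has_private_elements_def by metis
  obtain h where h: "bij_betw h {1..card G} G"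
    using ex_bij_betw_nat_finite_1[OF assms(2)] by blast
  have hG: "h j \<in> G" if "j \<in> {1..card G}" for j using bij_betw_apply[OF h that] .
  have "p (h i) \<in> h j \<longleftrightarrow> i = j" if i: "i \<in> {1..card G}" and j: "j \<in> {1..card G}" for i j
  proof
    assume "p (h i) \<in> h j"
    then have "h j = h i" using p[OF hG[OF i]] hG[OF j] by blast
    then show "i = j" using inj_on_eq_iff[OF bij_betw_imp_inj_on[OF h] j i] by simp
  qed (use p[OF hG[OF i]] in simp)
  then show ?thesis using hG assms(3) by (intro fam_t_ge[OF assms(1), where S = h and x = "\<lambda>i. p (h i)"]) auto
qed

lemma card_le_fam_rank:
  assumes "finite F" and "A \<in> F"
  shows "card A \<le> fam_rank F"
  unfolding fam_rank_def using assms by (intro Max_ge) auto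

lemma card_Union_le_card_mult_fam_rank:
  assumes "finite F" and "G \<subseteq> F"
  shows "card (\<Union>G) \<le> card G * fam_rank F"
proof -
  have "card (\<Union>G) \<le> sum card G" by (rule card_Union_le_sum_card)
  also have "\<dots> \<le> card G * fam_rank F"
    using sum_bounded_above[of G card "fam_rank F"] card_le_fam_rank[OF assms(1)] assms(2)
    by auto
  finally show ?thesis .
qed

lemma fam_f_nonzero_imp_cover:
  assumes "fam_f n F \<noteq> 0"
  obtains G where "G \<subseteq> F" and "\<Union>G = {1..n}"
proof -
  have "{G. G \<subseteq> F \<and> G \<noteq> {} \<and> \<Union>G = {1..n}} \<noteq> {}"
  proof
    assume "{G. G \<subseteq> F \<and> G \<noteq> {} \<and> \<Union>G = {1..n}} = {}"
    then have "fam_f n F = 0" unfolding fam_f_def by (simp only: sum.empty)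
    with assms show False by contradiction
  qed
  then show thesis using that by blast
qed

theorem lemma3p3:
  fixes n :: nat and F :: "nat set set"
  assumes "n \<ge> 1"
    and "F \<subseteq> Pow {1..n}"
    and "fam_f n F \<noteq> 0"
  shows "real (max (fam_rank F) (fam_t F)) \<ge> sqrt (real n)"
proof -
  have finU: "finite (\<Union>F)" using assms(2) by (meson Sup_le_iff PowD finite_atLeastAtMost finite_subset subsetD)
  then have finF: "finite F" by (rule finite_UnionD)
  obtain G0 where "G0 \<subseteq> F" "\<Union>G0 = {1..n}" using assms(3) by (rule fam_f_nonzero_imp_cover)
  moreover from \<open>G0 \<subseteq> F\<close> finF have "finite G0" by (rule finite_subset)
  ultimately obtain G where GF: "G \<subseteq> F" and GU: "\<Union>G = {1..n}" and "has_private_elements G"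
    using minimal_subcover_has_private_elements by (metis order_trans)
  moreover have "finite G" using GF finF by (rule finite_subset)
  ultimately have t: "card G \<le> fam_t F" using finU by (intro card_le_fam_t)
  define m where "m = max (fam_rank F) (fam_t F)"
  have "n = card (\<Union>G)" using GU by simp
  also have "\<dots> \<le> card G * fam_rank F" using finF GF by (rule card_Union_le_card_mult_fam_rank)
  also have "\<dots> \<le> m * m" unfolding m_def using t by (intro mult_mono) auto
  finally have "sqrt (real n) \<le> sqrt (real m * real m)"
    by (intro real_sqrt_le_mono) (simp only: of_nat_mult[symmetric] of_nat_le_iff)
  then show ?thesis unfolding m_def by simp
qed

end
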